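(* Almost surely, to decide the isomorphism of a pair of $n$-vertex graphs $G_1$ and $G_2$ it suffices to compare their multisets of induced subgraphs on $3\log_2 n$ vertices: for almost every $n$-vertex graph $G_1$, if $G_2$ is an $n$-vertex graph with $C_{G_1}(F)=C_{G_2}(F)$ for every $F\in\Gamma_{3\log_2 n}$, then $G_1\cong G_2$.
   Context: Graphs are finite, simple, undirected; all subgraphs are induced subgraphs. $\Gamma_m$ denotes the set of all (isomorphism types of) graphs on $m$ vertices, and $C_G(F)$ is the number of induced subgraphs of $G$ isomorphic to $F$. "Almost every $n$-vertex graph has property $Q$" (or "almost surely") means: in the random graph on $n$ labeled vertices where each edge is present independently with probability $1/2$, the probability of $Q$ tends to $1$ as $n\to\infty$. *)

theory Defs
  imports Complex_Main
begin

definition graphs :: "nat \<Rightarrow> nat set set set" where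
  "graphs n = Pow {e. e \<subseteq> {..<n} \<and> card e = 2}"

definition graph_iso :: "'a set \<Rightarrow> 'a set set \<Rightarrow> 'b set \<Rightarrow> 'b set set \<Rightarrow> bool" where
  "graph_iso V1 E1 V2 E2 \<longleftrightarrow>
     (\<exists>f. bij_betw f V1 V2 \<and> (\<forall>x\<in>V1. \<forall>y\<in>V1. {x, y} \<in> E1 \<longleftrightarrow> {f x, f y} \<in> E2))"

definition ind_count :: "'a set \<Rightarrow> 'a set set \<Rightarrow> nat \<Rightarrow> nat set set \<Rightarrow> nat" where
  "ind_count V E m F = card {S. S \<subseteq> V \<and> card S = m \<and> graph_iso S (E \<inter> Pow S) {..<m} F}"

definition sub_size :: "nat \<Rightarrow> nat" where
  "sub_size n = nat \<lceil>3 * log 2 (real n)\<rceil>"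

end

(*
  Call a vertex set S of a graph G1 on V rigid if every injection of S into V that preserves
  adjacency and non-adjacency inside S is the identity, and separating if distinct vertices
  outside S have distinct neighbourhoods in S. Such a set makes G1 recoverable from the numbers
  of its induced subgraphs on card S + 2 vertices. Equal counts give a bijection beta between the
  (card S + 2)-sets of G1 and of G2 with T isomorphic to beta T. By rigidity, a copy of S inside
  some beta T can only be the image of S itself, and counting the sets through S and through a
  fixed copy S' shows that the sets containing S are exactly those matched with sets containing
  S', all their isomorphisms agreeing on S. Separation then makes the isomorphisms agree on every
  vertex, and they glue to an isomorphism of G1 onto G2.

  For S = {0, ..., s - 1} with s = sub_size n - 2, a union bound shows that only a vanishing
  fraction of the graphs on n vertices lack one of the two properties. Two vertices with equal
  neighbourhoods in S impose s independent constraints on the edges. For a non-identity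
  injection pi of S that respects the edges, whether a pair q is an edge is tied to whether
  pi ` q is; choosing the pairs along an acyclic ranking of this relation yields about 3s/8
  independent constraints per point leaving S plus s/32 per point moved inside S. Summing over
  all injections gives a bound that vanishes because n <= 2 powr ((s + 2) / 3).
*)
theory Submission
  imports Defs "HOL-Library.FuncSet" "HOL-Real_Asymp.Real_Asymp"
begin

definition pairs :: "'a set \<Rightarrow> 'a set set" where
  "pairs V = {e. e \<subseteq> V \<and> card e = 2}"

lemma graphs_eq_Pow_pairs: "graphs n = Pow (pairs {..<n})"
  by (simp add: graphs_def pairs_def)

lemma finite_pairs: "finite V \<Longrightarrow> finite (pairs V)"
  unfolding pairs_def by (rule finite_subset[of _ "Pow V"]) auto

lemma card_pairs: "finite V \<Longrightarrow> card (pairs V) = card V choose 2"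
  unfolding pairs_def by (rule n_subsets)

lemma card_graphs: "card (graphs n) = 2 ^ (n choose 2)"
  by (simp add: graphs_eq_Pow_pairs card_Pow card_pairs finite_pairs)

definition respects_edges :: "('a \<Rightarrow> 'b) \<Rightarrow> 'a set \<Rightarrow> 'a set set \<Rightarrow> 'b set set \<Rightarrow> bool" where
  "respects_edges f A E F \<longleftrightarrow> (\<forall>x\<in>A. \<forall>y\<in>A. {x, y} \<in> E \<longleftrightarrow> {f x, f y} \<in> F)"

lemma graph_iso_iff: "graph_iso V1 E1 V2 E2 \<longleftrightarrow> (\<exists>f. bij_betw f V1 V2 \<and> respects_edges f V1 E1 E2)"
  by (simp add: graph_iso_def respects_edges_def)

lemma respects_edges_cong:
  "(\<And>x. x \<in> A \<Longrightarrow> f x = g x) \<Longrightarrow> respects_edges f A E F \<longleftrightarrow> respects_edges g A E F"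
  by (simp add: respects_edges_def)

lemma respects_edges_subset: "respects_edges f A E F \<Longrightarrow> B \<subseteq> A \<Longrightarrow> respects_edges f B E F"
  unfolding respects_edges_def by blast

lemma respects_edges_comp:
  "respects_edges f A E F \<Longrightarrow> respects_edges g (f ` A) F H \<Longrightarrow> respects_edges (g \<circ> f) A E H"
  unfolding respects_edges_def by auto

lemma respects_edges_inv_into:
  "inj_on f A \<Longrightarrow> respects_edges f A E F \<Longrightarrow> respects_edges (inv_into A f) (f ` A) F E"
  unfolding respects_edges_def by auto

lemma respects_edges_induced:
  "respects_edges f A (E \<inter> Pow A) (F \<inter> Pow (f ` A)) \<longleftrightarrow> respects_edges f A E F"
  unfolding respects_edges_def by auto

lemma graph_iso_refl: "graph_iso V E V E"
  unfolding graph_iso_iff respects_edges_def by (auto intro: exI[of _ id])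

lemma graph_iso_sym: "graph_iso V1 E1 V2 E2 \<Longrightarrow> graph_iso V2 E2 V1 E1"
  unfolding graph_iso_iff by (metis bij_betw_def bij_betw_inv_into respects_edges_inv_into)

lemma graph_iso_trans:
  "graph_iso V1 E1 V2 E2 \<Longrightarrow> graph_iso V2 E2 V3 E3 \<Longrightarrow> graph_iso V1 E1 V3 E3"
  unfolding graph_iso_iff by (metis bij_betw_def bij_betw_trans respects_edges_comp)

lemma graph_iso_induced: "graph_iso A (E \<inter> Pow A) B (F \<inter> Pow B) \<longleftrightarrow> graph_iso A E B F"
  unfolding graph_iso_iff by (metis bij_betw_def respects_edges_induced)

lemma ex_graph_iso_standard:
  assumes "finite T" "\<forall>e\<in>E. card e = 2"
  shows "\<exists>F\<in>graphs (card T). graph_iso T (E \<inter> Pow T) {..<card T} F"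
proof -
  obtain b where b: "bij_betw b T {..<card T}"
    using ex_bij_betw_finite_nat[OF assms(1)] by (auto simp: atLeast0LessThan)
  then have inj: "inj_on b T" by (simp add: bij_betw_def)
  define F where "F = image b ` (E \<inter> Pow T)"
  have "card (b ` e) = 2" if "e \<in> E \<inter> Pow T" for e
    using that assms(2) card_image[OF inj_on_subset[OF inj]] by auto
  then have "F \<in> graphs (card T)"
    using b by (auto simp: F_def graphs_def bij_betw_def)
  moreover have "respects_edges b T (E \<inter> Pow T) F"
    unfolding respects_edges_def F_def
  proof (intro ballI)
    fix x y assume "x \<in> T" "y \<in> T"
    then show "{x, y} \<in> E \<inter> Pow T \<longleftrightarrow> {b x, b y} \<in> image b ` (E \<inter> Pow T)"
      using inj_on_image_mem_iff[OF inj_on_image_Pow[OF inj], of "{x, y}" "E \<inter> Pow T"] by auto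
  qed
  ultimately show ?thesis using b unfolding graph_iso_iff by blast
qed

section \<open>Matching the induced subgraphs of two graphs with equal counts\<close>

definition k_subsets :: "'a set \<Rightarrow> nat \<Rightarrow> 'a set set" where
  "k_subsets V k = {T. T \<subseteq> V \<and> card T = k}"

lemma finite_k_subsets: "finite V \<Longrightarrow> finite (k_subsets V k)"
  unfolding k_subsets_def by (rule finite_subset[of _ "Pow V"]) auto

lemma card_k_subsets_supersets:
  assumes "finite V" "C \<subseteq> V"
  shows "card {T \<in> k_subsets V (card C + k). C \<subseteq> T} = (card V - card C) choose k"
proof -
  have fin: "finite C" "finite (V - C)" using assms finite_subset by auto
  have "{T \<in> k_subsets V (card C + k). C \<subseteq> T} = (\<union>) C ` k_subsets (V - C) k"
  proof (intro set_eqI iffI)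
    fix T assume T: "T \<in> {T \<in> k_subsets V (card C + k). C \<subseteq> T}"
    then have "card (T - C) = k" "T = C \<union> (T - C)"
      using fin card_Diff_subset[of C T] by (auto simp: k_subsets_def)
    then show "T \<in> (\<union>) C ` k_subsets (V - C) k" using T by (auto simp: k_subsets_def)
  next
    fix T assume "T \<in> (\<union>) C ` k_subsets (V - C) k"
    then obtain U where "U \<subseteq> V - C" "card U = k" "T = C \<union> U" by (auto simp: k_subsets_def)
    moreover have "finite U" using \<open>U \<subseteq> V - C\<close> fin finite_subset by blast
    moreover have "card (C \<union> U) = card C + card U"
      using \<open>U \<subseteq> V - C\<close> \<open>finite U\<close> fin by (intro card_Un_disjoint) auto
    ultimately show "T \<in> {T \<in> k_subsets V (card C + k). C \<subseteq> T}"
      using assms by (auto simp: k_subsets_def)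
  qed
  moreover have "inj_on ((\<union>) C) (k_subsets (V - C) k)"
    by (rule inj_onI) (auto simp: k_subsets_def)
  ultimately show ?thesis
    using n_subsets[OF fin(2), of k] assms card_Diff_subset[OF fin(1)]
    by (simp add: card_image k_subsets_def)
qed

lemma ex_bij_betw_equal_fibres:
  assumes "finite A" "finite B" "\<And>c. card {a\<in>A. f a = c} = card {b\<in>B. g b = c}"
  shows "\<exists>h. bij_betw h A B \<and> (\<forall>a\<in>A. g (h a) = f a)"
proof -
  have "\<forall>c. \<exists>h. bij_betw h {a\<in>A. f a = c} {b\<in>B. g b = c}"
    using assms by (intro allI finite_same_card_bij) auto
  then obtain H where H: "\<And>c. bij_betw (H c) {a\<in>A. f a = c} {b\<in>B. g b = c}" by metis
  define h where "h a = H (f a) a" for a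
  have h: "h a \<in> B" "g (h a) = f a" if "a \<in> A" for a
    using H[of "f a"] that unfolding h_def bij_betw_def by auto
  have "inj_on h A"
  proof (rule inj_onI)
    fix a a' assume "a \<in> A" "a' \<in> A" "h a = h a'"
    moreover from this have "f a = f a'" using h by metis
    ultimately show "a = a'" using H[of "f a"] unfolding h_def bij_betw_def inj_on_def by auto
  qed
  moreover have "B \<subseteq> h ` A"
  proof
    fix b assume "b \<in> B"
    then obtain a where "a \<in> A" "f a = g b" "b = H (g b) a"
      using H[of "g b"] by (force simp: bij_betw_def)
    then have "b = h a" by (simp add: h_def)
    with \<open>a \<in> A\<close> show "b \<in> h ` A" by blast
  qed
  ultimately show ?thesis using h by (auto simp: bij_betw_def)
qed

text \<open>The isomorphism class of the subgraph induced on \<open>T\<close>, represented by all its copies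
  on \<open>{..<m}\<close>.\<close>

definition iso_type :: "nat \<Rightarrow> 'a set set \<Rightarrow> 'a set \<Rightarrow> nat set set set" where
  "iso_type m G T = {F \<in> graphs m. graph_iso T (G \<inter> Pow T) {..<m} F}"

lemma iso_type_nonempty:
  assumes "finite V" "G \<subseteq> pairs V" "T \<in> k_subsets V m"
  shows "iso_type m G T \<noteq> {}"
proof -
  have "finite T" "\<forall>e\<in>G. card e = 2" "card T = m"
    using assms finite_subset by (auto simp: k_subsets_def pairs_def)
  then show ?thesis using ex_graph_iso_standard[of T G] by (auto simp: iso_type_def)
qed

lemma iso_type_eq_iso_type_graph:
  assumes "F \<in> iso_type m G T"
  shows "iso_type m G T = iso_type m F {..<m}"
proof -
  have "F \<inter> Pow {..<m} = F" using assms by (auto simp: iso_type_def graphs_def)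
  moreover have "graph_iso T (G \<inter> Pow T) {..<m} F" using assms by (simp add: iso_type_def)
  then have "graph_iso T (G \<inter> Pow T) {..<m} F' \<longleftrightarrow> graph_iso {..<m} F {..<m} F'" for F'
    by (meson graph_iso_sym graph_iso_trans)
  ultimately show ?thesis by (simp add: iso_type_def)
qed

lemma card_iso_type_fibre:
  assumes F: "F \<in> graphs m"
  shows "card {T \<in> k_subsets V m. iso_type m G T = iso_type m F {..<m}} = ind_count V G m F"
proof -
  have "F \<inter> Pow {..<m} = F" using F by (auto simp: graphs_def)
  then have "F \<in> iso_type m F {..<m}" using F graph_iso_refl by (simp add: iso_type_def)
  then have "iso_type m G T = iso_type m F {..<m} \<longleftrightarrow> F \<in> iso_type m G T" for T
    using iso_type_eq_iso_type_graph[of F m G T] by auto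
  then have "{T \<in> k_subsets V m. iso_type m G T = iso_type m F {..<m}}
      = {T \<in> k_subsets V m. F \<in> iso_type m G T}" by simp
  then show ?thesis using F by (simp add: iso_type_def ind_count_def k_subsets_def conj_assoc)
qed

lemma card_iso_type_fibres_eq:
  assumes "finite V" "G1 \<subseteq> pairs V" "G2 \<subseteq> pairs V"
    and counts: "\<forall>F\<in>graphs m. ind_count V G1 m F = ind_count V G2 m F"
  shows "card {T \<in> k_subsets V m. iso_type m G1 T = c}
    = card {T \<in> k_subsets V m. iso_type m G2 T = c}"
proof (cases "\<exists>F\<in>graphs m. c = iso_type m F {..<m}")
  case True
  then obtain F where "F \<in> graphs m" "c = iso_type m F {..<m}" by blast
  then show ?thesis using counts card_iso_type_fibre[of F m V] by simp
next
  case False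
  have empty: "{T \<in> k_subsets V m. iso_type m G T = c} = {}" if G: "G \<subseteq> pairs V" for G
  proof -
    have "iso_type m G T \<noteq> c" if T: "T \<in> k_subsets V m" for T
    proof -
      obtain F where F: "F \<in> iso_type m G T" using iso_type_nonempty[OF assms(1) G T] by blast
      then have "F \<in> graphs m" by (simp add: iso_type_def)
      with False iso_type_eq_iso_type_graph[OF F] show ?thesis by blast
    qed
    then show ?thesis by blast
  qed
  show ?thesis by (simp only: empty[OF assms(2)] empty[OF assms(3)])
qed

lemma ex_bij_k_subsets_graph_iso:
  assumes "finite V" "G1 \<subseteq> pairs V" "G2 \<subseteq> pairs V"
    and "\<forall>F\<in>graphs m. ind_count V G1 m F = ind_count V G2 m F"
  shows "\<exists>\<beta>. bij_betw \<beta> (k_subsets V m) (k_subsets V m)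
           \<and> (\<forall>T\<in>k_subsets V m. graph_iso T G1 (\<beta> T) G2)"
proof -
  obtain \<beta> where \<beta>: "bij_betw \<beta> (k_subsets V m) (k_subsets V m)"
    "\<forall>T\<in>k_subsets V m. iso_type m G2 (\<beta> T) = iso_type m G1 T"
    using ex_bij_betw_equal_fibres[OF finite_k_subsets finite_k_subsets
        card_iso_type_fibres_eq[OF assms]] assms(1)
    by blast
  have "graph_iso T G1 (\<beta> T) G2" if T: "T \<in> k_subsets V m" for T
  proof -
    obtain F where F: "F \<in> iso_type m G1 T" using iso_type_nonempty[OF assms(1,2) T] by blast
    then have "F \<in> iso_type m G2 (\<beta> T)" using \<beta>(2) T by simp
    with F have "graph_iso T (G1 \<inter> Pow T) {..<m} F" "graph_iso (\<beta> T) (G2 \<inter> Pow (\<beta> T)) {..<m} F"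
      by (simp_all add: iso_type_def)
    then have "graph_iso T (G1 \<inter> Pow T) (\<beta> T) (G2 \<inter> Pow (\<beta> T))"
      by (rule graph_iso_trans[OF _ graph_iso_sym])
    then show ?thesis by (simp add: graph_iso_induced)
  qed
  with \<beta>(1) show ?thesis by blast
qed

section \<open>A rigid separating set determines the graph\<close>

definition neighbours_in :: "'a set set \<Rightarrow> 'a set \<Rightarrow> 'a \<Rightarrow> 'a set" where
  "neighbours_in E S u = {x \<in> S. {x, u} \<in> E}"

definition rigid_set :: "'a set \<Rightarrow> 'a set set \<Rightarrow> 'a set \<Rightarrow> bool" where
  "rigid_set V E S \<longleftrightarrow>
     (\<forall>f. inj_on f S \<longrightarrow> f ` S \<subseteq> V \<longrightarrow> respects_edges f S E E \<longrightarrow> (\<forall>x\<in>S. f x = x))"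

definition separating_set :: "'a set \<Rightarrow> 'a set set \<Rightarrow> 'a set \<Rightarrow> bool" where
  "separating_set V E S \<longleftrightarrow> inj_on (neighbours_in E S) (V - S)"

locale block_correspondence =
  fixes V :: "'a set" and G1 G2 :: "'a set set" and S :: "'a set"
    and \<beta> :: "'a set \<Rightarrow> 'a set" and \<Gamma> :: "'a set \<Rightarrow> 'a \<Rightarrow> 'a"
  assumes finite_V: "finite V" and S_subset: "S \<subseteq> V" and card_S: "card S + 2 \<le> card V"
    and rigid: "rigid_set V G1 S" and separating: "separating_set V G1 S"
    and \<beta>_bij: "bij_betw \<beta> (k_subsets V (card S + 2)) (k_subsets V (card S + 2))"
    and \<Gamma>_bij: "T \<in> k_subsets V (card S + 2) \<Longrightarrow> bij_betw (\<Gamma> T) T (\<beta> T)"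
    and \<Gamma>_edges: "T \<in> k_subsets V (card S + 2) \<Longrightarrow> respects_edges (\<Gamma> T) T G1 G2"
begin

abbreviation blocks :: "'a set set" where
  "blocks \<equiv> k_subsets V (card S + 2)"

lemma finite_S: "finite S"
  using finite_subset[OF S_subset finite_V] .

lemma \<Gamma>_into_V:
  assumes "T \<in> blocks" "x \<in> T"
  shows "\<Gamma> T x \<in> V"
proof -
  have "\<Gamma> T x \<in> \<beta> T" using bij_betw_apply[OF \<Gamma>_bij[OF assms(1)] assms(2)] .
  moreover have "\<beta> T \<in> blocks" using bij_betw_apply[OF \<beta>_bij assms(1)] .
  ultimately show ?thesis by (auto simp: k_subsets_def)
qed

lemma ex_block_containing:
  assumes "X \<subseteq> V" "card X \<le> card S + 2"
  obtains T where "T \<in> blocks" "X \<subseteq> T"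
proof -
  obtain T where "X \<subseteq> T" "T \<subseteq> V" "card T = card S + 2"
    using exists_subset_between[OF assms(2) card_S assms(1) finite_V] by blast
  with that show thesis by (simp add: k_subsets_def)
qed

lemma ex_block_containing_pair:
  assumes "x \<in> V" "y \<in> V"
  obtains T where "T \<in> blocks" "S \<subseteq> T" "x \<in> T" "y \<in> T"
proof -
  have "insert x (insert y S) \<subseteq> V" using assms S_subset by simp
  moreover have "card (insert x (insert y S)) \<le> card S + 2"
    using finite_S by (simp add: card_insert_if)
  ultimately obtain T where "T \<in> blocks" "insert x (insert y S) \<subseteq> T"
    by (rule ex_block_containing)
  with that show thesis by simp
qed

text \<open>\<open>inv_into T (\<Gamma> T) \<circ> h\<close> maps \<open>S\<close> into \<open>V\<close> respecting the edges of \<open>G1\<close>, so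
  rigidity makes it the identity.\<close>

lemma \<Gamma>_pullback:
  assumes T: "T \<in> blocks"
    and h: "inj_on h S" "h ` S \<subseteq> \<beta> T" "respects_edges h S G1 G2"
  shows "S \<subseteq> T" "\<forall>x\<in>S. \<Gamma> T x = h x"
proof -
  let ?g = "inv_into T (\<Gamma> T)"
  have bij: "bij_betw (\<Gamma> T) T (\<beta> T)" using \<Gamma>_bij[OF T] .
  have "respects_edges ?g (\<beta> T) G2 G1"
    using respects_edges_inv_into[OF bij_betw_imp_inj_on[OF bij] \<Gamma>_edges[OF T]]
      bij_betw_imp_surj_on[OF bij] by simp
  then have edges: "respects_edges (?g \<circ> h) S G1 G1"
    by (intro respects_edges_comp[OF h(3)] respects_edges_subset[OF _ h(2)])
  have inj: "inj_on (?g \<circ> h) S"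
    using h bij by (intro comp_inj_on inj_on_inv_into) (auto simp: bij_betw_def)
  have g_h: "?g (h x) \<in> T" "\<Gamma> T (?g (h x)) = h x" if "x \<in> S" for x
    using that h bij by (auto simp: bij_betw_def inv_into_into f_inv_into_f)
  then have "(?g \<circ> h) ` S \<subseteq> V" using T by (auto simp: k_subsets_def)
  then have "\<forall>x\<in>S. (?g \<circ> h) x = x"
    using rigid inj edges unfolding rigid_set_def by blast
  with g_h show "S \<subseteq> T" "\<forall>x\<in>S. \<Gamma> T x = h x" by auto
qed

lemma ex_copy_of_S:
  obtains \<phi> where "inj_on \<phi> S" "\<phi> ` S \<subseteq> V" "respects_edges \<phi> S G1 G2"
proof -
  obtain T where T: "T \<in> blocks" "S \<subseteq> T"
    using ex_block_containing[of S] S_subset by auto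
  show thesis
  proof
    show "inj_on (\<Gamma> T) S"
      using \<Gamma>_bij[OF T(1)] T(2) by (auto simp: bij_betw_def intro: inj_on_subset)
    show "\<Gamma> T ` S \<subseteq> V" using \<Gamma>_into_V T by auto
    show "respects_edges (\<Gamma> T) S G1 G2"
      using \<Gamma>_edges[OF T(1)] T(2) by (rule respects_edges_subset)
  qed
qed

end

locale block_correspondence_copy = block_correspondence +
  fixes \<phi> :: "'a \<Rightarrow> 'a"
  assumes \<phi>_inj: "inj_on \<phi> S" and \<phi>_into: "\<phi> ` S \<subseteq> V"
    and \<phi>_edges: "respects_edges \<phi> S G1 G2"
begin

lemma card_copy: "card (\<phi> ` S) = card S"
  using \<phi>_inj by (rule card_image)

text \<open>Both sides count the blocks containing a fixed \<open>card S\<close>-set, so the inclusion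
  given by \<open>\<Gamma>_pullback\<close> is an equality.\<close>

lemma S_subset_block_iff:
  assumes "T \<in> blocks"
  shows "S \<subseteq> T \<longleftrightarrow> \<phi> ` S \<subseteq> \<beta> T"
proof -
  let ?X = "{T \<in> blocks. S \<subseteq> T}" and ?Y = "{T \<in> blocks. \<phi> ` S \<subseteq> \<beta> T}"
  have "?Y \<subseteq> ?X"
  proof
    fix T assume "T \<in> ?Y"
    then have "T \<in> blocks" "\<phi> ` S \<subseteq> \<beta> T" by auto
    then show "T \<in> ?X" using \<Gamma>_pullback(1)[OF _ \<phi>_inj _ \<phi>_edges] by simp
  qed
  have "card ?Y = card (\<beta> ` ?Y)"
    by (intro card_image[symmetric] inj_on_subset[OF bij_betw_imp_inj_on[OF \<beta>_bij]]) auto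
  also have "\<beta> ` ?Y = {T' \<in> \<beta> ` blocks. \<phi> ` S \<subseteq> T'}" by auto
  also have "\<dots> = {T' \<in> blocks. \<phi> ` S \<subseteq> T'}" using bij_betw_imp_surj_on[OF \<beta>_bij] by simp
  also have "card \<dots> = card ?X"
    using card_k_subsets_supersets[OF finite_V \<phi>_into, of 2]
      card_k_subsets_supersets[OF finite_V S_subset, of 2] card_copy by simp
  finally have "?Y = ?X"
    using \<open>?Y \<subseteq> ?X\<close> finite_k_subsets[OF finite_V] by (intro card_subset_eq) auto
  then show ?thesis using assms by blast
qed

lemma \<Gamma>_eq_copy:
  assumes "T \<in> blocks" "S \<subseteq> T" "x \<in> S"
  shows "\<Gamma> T x = \<phi> x"
proof -
  have "\<phi> ` S \<subseteq> \<beta> T" using S_subset_block_iff assms(1,2) by simp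
  then show ?thesis using \<Gamma>_pullback(2)[OF assms(1) \<phi>_inj _ \<phi>_edges] assms(3) by simp
qed

lemma \<Gamma>_image_S: "T \<in> blocks \<Longrightarrow> S \<subseteq> T \<Longrightarrow> \<Gamma> T ` S = \<phi> ` S"
  using \<Gamma>_eq_copy by (simp cong: image_cong)

definition trace :: "'a \<Rightarrow> 'a set" where
  "trace u = {x \<in> S. {\<phi> x, u} \<in> G2}"

lemma \<Gamma>_outside_S:
  assumes T: "T \<in> blocks" "S \<subseteq> T" and w: "w \<in> T - S"
  shows "\<Gamma> T w \<in> V - \<phi> ` S" "trace (\<Gamma> T w) = neighbours_in G1 S w"
proof -
  have "inj_on (\<Gamma> T) T" using \<Gamma>_bij[OF T(1)] by (simp add: bij_betw_def)
  then have "\<Gamma> T w \<notin> \<Gamma> T ` S" using T(2) w by (auto simp: inj_on_def)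
  then show "\<Gamma> T w \<in> V - \<phi> ` S" using \<Gamma>_into_V[OF T(1)] w \<Gamma>_image_S[OF T] by auto
  have "{\<phi> x, \<Gamma> T w} \<in> G2 \<longleftrightarrow> {x, w} \<in> G1" if "x \<in> S" for x
  proof -
    have "x \<in> T" "w \<in> T" using that T(2) w by auto
    then have "{x, w} \<in> G1 \<longleftrightarrow> {\<Gamma> T x, \<Gamma> T w} \<in> G2"
      using \<Gamma>_edges[OF T(1)] by (simp add: respects_edges_def)
    then show ?thesis using \<Gamma>_eq_copy[OF T that] by simp
  qed
  then show "trace (\<Gamma> T w) = neighbours_in G1 S w"
    by (auto simp: trace_def neighbours_in_def)
qed

text \<open>The copy \<open>\<phi> ` S\<close> is separating in \<open>G2\<close>: two vertices with the same trace
  would, together with the copy, form the image of a block in which two vertices outside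
  \<open>S\<close> have the same neighbourhood in \<open>S\<close>.\<close>

lemma inj_on_trace: "inj_on trace (V - \<phi> ` S)"
proof
  fix u v assume u: "u \<in> V - \<phi> ` S" and v: "v \<in> V - \<phi> ` S" and eq: "trace u = trace v"
  show "u = v"
  proof (rule ccontr)
    assume "u \<noteq> v"
    define T' where "T' = insert u (insert v (\<phi> ` S))"
    have "T' \<in> blocks"
      using u v \<open>u \<noteq> v\<close> \<phi>_into card_copy finite_S by (auto simp: T'_def k_subsets_def)
    then have "T' \<in> \<beta> ` blocks" using bij_betw_imp_surj_on[OF \<beta>_bij] by simp
    then obtain T where T: "T' = \<beta> T" "T \<in> blocks" by (rule imageE)
    have "\<phi> ` S \<subseteq> \<beta> T" unfolding T(1)[symmetric] T'_def by auto
    then have ST: "S \<subseteq> T" using S_subset_block_iff[OF T(2)] by simp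
    have "\<Gamma> T ` (T - S) = \<Gamma> T ` T - \<Gamma> T ` S"
      using inj_on_image_set_diff[OF bij_betw_imp_inj_on[OF \<Gamma>_bij[OF T(2)]] Diff_subset ST] .
    also have "\<dots> = {u, v}"
      using bij_betw_imp_surj_on[OF \<Gamma>_bij[OF T(2)]] \<Gamma>_image_S[OF T(2) ST] T(1) u v
      by (auto simp: T'_def)
    finally have uv: "u \<in> \<Gamma> T ` (T - S)" "v \<in> \<Gamma> T ` (T - S)" by auto
    obtain a where a: "u = \<Gamma> T a" "a \<in> T - S" using uv(1) by (rule imageE)
    obtain b where b: "v = \<Gamma> T b" "b \<in> T - S" using uv(2) by (rule imageE)
    have "neighbours_in G1 S a = neighbours_in G1 S b"
      using \<Gamma>_outside_S(2)[OF T(2) ST a(2)] \<Gamma>_outside_S(2)[OF T(2) ST b(2)] a(1) b(1) eq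
      by simp
    moreover have "a \<in> V - S" "b \<in> V - S" using a(2) b(2) T(2) by (auto simp: k_subsets_def)
    ultimately have "a = b"
      using inj_onD[OF separating[unfolded separating_set_def]] by blast
    with a(1) b(1) \<open>u \<noteq> v\<close> show False by simp
  qed
qed

lemma \<Gamma>_consistent:
  assumes T1: "T1 \<in> blocks" "S \<subseteq> T1" and T2: "T2 \<in> blocks" "S \<subseteq> T2"
    and x: "x \<in> T1" "x \<in> T2"
  shows "\<Gamma> T1 x = \<Gamma> T2 x"
proof (cases "x \<in> S")
  case True
  then show ?thesis using \<Gamma>_eq_copy T1 T2 by simp
next
  case False
  then have "\<Gamma> T1 x \<in> V - \<phi> ` S" "\<Gamma> T2 x \<in> V - \<phi> ` S"
    "trace (\<Gamma> T1 x) = trace (\<Gamma> T2 x)"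
    using \<Gamma>_outside_S[OF T1, of x] \<Gamma>_outside_S[OF T2, of x] x by auto
  then show ?thesis by (intro inj_onD[OF inj_on_trace])
qed

definition glued :: "'a \<Rightarrow> 'a" where
  "glued x = \<Gamma> (SOME T. T \<in> blocks \<and> insert x S \<subseteq> T) x"

lemma \<Gamma>_eq_glued:
  assumes T: "T \<in> blocks" "S \<subseteq> T" "x \<in> T"
  shows "\<Gamma> T x = glued x"
proof -
  let ?T = "SOME T. T \<in> blocks \<and> insert x S \<subseteq> T"
  have "\<exists>T'. T' \<in> blocks \<and> insert x S \<subseteq> T'" using T by auto
  then have "?T \<in> blocks" "insert x S \<subseteq> ?T" by (metis (no_types, lifting) someI_ex)+
  then show ?thesis using \<Gamma>_consistent[OF T(1,2) \<open>?T \<in> blocks\<close> _ T(3)] unfolding glued_def by simp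
qed

lemma graph_iso_V: "graph_iso V G1 V G2"
proof -
  have "inj_on glued V"
  proof (rule inj_onI)
    fix x y assume xy: "x \<in> V" "y \<in> V" "glued x = glued y"
    obtain T where T: "T \<in> blocks" "S \<subseteq> T" "x \<in> T" "y \<in> T"
      using xy(1,2) by (rule ex_block_containing_pair)
    then have "\<Gamma> T x = \<Gamma> T y" using \<Gamma>_eq_glued xy(3) by simp
    then show "x = y" using inj_onD[OF bij_betw_imp_inj_on[OF \<Gamma>_bij[OF T(1)]]] T(3,4) by blast
  qed
  moreover have "glued ` V \<subseteq> V"
  proof
    fix y assume "y \<in> glued ` V"
    then obtain x where x: "y = glued x" "x \<in> V" by (rule imageE)
    obtain T where T: "T \<in> blocks" "S \<subseteq> T" "x \<in> T" "x \<in> T"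
      using x(2) x(2) by (rule ex_block_containing_pair)
    then show "y \<in> V" using \<Gamma>_into_V[OF T(1,3)] \<Gamma>_eq_glued[OF T(1-3)] x(1) by simp
  qed
  ultimately have "bij_betw glued V V" using endo_inj_surj[OF finite_V] by (simp add: bij_betw_def)
  moreover have "respects_edges glued V G1 G2"
    unfolding respects_edges_def
  proof (intro ballI)
    fix x y assume "x \<in> V" "y \<in> V"
    then obtain T where T: "T \<in> blocks" "S \<subseteq> T" "x \<in> T" "y \<in> T" by (rule ex_block_containing_pair)
    then show "{x, y} \<in> G1 \<longleftrightarrow> {glued x, glued y} \<in> G2"
      using \<Gamma>_edges[OF T(1)] \<Gamma>_eq_glued[OF T(1,2)] by (simp add: respects_edges_def)
  qed
  ultimately show ?thesis unfolding graph_iso_iff by blast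
qed

end

theorem graph_iso_if_equal_induced_counts:
  assumes "finite V" "G1 \<subseteq> pairs V" "G2 \<subseteq> pairs V" "S \<subseteq> V" "card S + 2 \<le> card V"
    and "rigid_set V G1 S" "separating_set V G1 S"
    and "\<forall>F\<in>graphs (card S + 2). ind_count V G1 (card S + 2) F = ind_count V G2 (card S + 2) F"
  shows "graph_iso V G1 V G2"
proof -
  obtain \<beta> where \<beta>: "bij_betw \<beta> (k_subsets V (card S + 2)) (k_subsets V (card S + 2))"
    "\<forall>T\<in>k_subsets V (card S + 2). graph_iso T G1 (\<beta> T) G2"
    using ex_bij_k_subsets_graph_iso[OF assms(1-3,8)] by blast
  then have "\<forall>T\<in>k_subsets V (card S + 2). \<exists>g. bij_betw g T (\<beta> T) \<and> respects_edges g T G1 G2"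
    by (simp add: graph_iso_iff)
  then have "\<exists>\<Gamma>. \<forall>T\<in>k_subsets V (card S + 2).
      bij_betw (\<Gamma> T) T (\<beta> T) \<and> respects_edges (\<Gamma> T) T G1 G2"
    by (rule bchoice)
  then obtain \<Gamma> where \<Gamma>: "\<forall>T\<in>k_subsets V (card S + 2).
      bij_betw (\<Gamma> T) T (\<beta> T) \<and> respects_edges (\<Gamma> T) T G1 G2"
    by blast
  have "block_correspondence V G1 G2 S \<beta> \<Gamma>"
    unfolding block_correspondence_def using assms(1,4-7) \<beta>(1) \<Gamma> by blast
  then interpret block_correspondence V G1 G2 S \<beta> \<Gamma> .
  obtain \<phi> where "inj_on \<phi> S" "\<phi> ` S \<subseteq> V" "respects_edges \<phi> S G1 G2"
    by (rule ex_copy_of_S)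
  then interpret block_correspondence_copy V G1 G2 S \<beta> \<Gamma> \<phi>
    by unfold_locales
  show ?thesis by (rule graph_iso_V)
qed

section \<open>Counting graphs subject to edge constraints\<close>

definition ranked_on :: "('a \<Rightarrow> 'a) \<Rightarrow> 'a set \<Rightarrow> bool" where
  "ranked_on \<rho> Q \<longleftrightarrow> (\<exists>\<mu> :: 'a \<Rightarrow> nat. \<forall>q\<in>Q. \<rho> q \<in> Q \<longrightarrow> \<mu> (\<rho> q) < \<mu> q)"

text \<open>A set satisfying the constraints is determined by its part outside \<open>Q\<close>: inside \<open>Q\<close>,
  membership propagates along \<open>\<rho>\<close> and the rank guarantees that this terminates.\<close>

lemma card_constrained_subsets_le:
  assumes "finite E" "Q \<subseteq> E" "ranked_on \<rho> Q"
  shows "card {G \<in> Pow E. \<forall>q\<in>Q. q \<in> G \<longleftrightarrow> \<rho> q \<in> G} \<le> 2 ^ (card E - card Q)"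
proof -
  let ?C = "{G \<in> Pow E. \<forall>q\<in>Q. q \<in> G \<longleftrightarrow> \<rho> q \<in> G}"
  obtain \<mu> :: "'a \<Rightarrow> nat" where \<mu>: "\<And>q. q \<in> Q \<Longrightarrow> \<rho> q \<in> Q \<Longrightarrow> \<mu> (\<rho> q) < \<mu> q"
    using assms(3) unfolding ranked_on_def by blast
  have "inj_on (\<lambda>G. G - Q) ?C"
  proof (rule inj_onI)
    fix G G' assume G: "G \<in> ?C" and G': "G' \<in> ?C" and eq: "G - Q = G' - Q"
    have "q \<in> Q \<longrightarrow> (q \<in> G \<longleftrightarrow> q \<in> G')" for q
    proof (induction "\<mu> q" arbitrary: q rule: less_induct)
      case less
      show ?case
      proof
        assume q: "q \<in> Q"
        have "\<rho> q \<in> G \<longleftrightarrow> \<rho> q \<in> G'"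
        proof (cases "\<rho> q \<in> Q")
          case True
          then show ?thesis using less \<mu>[OF q True] by blast
        next
          case False
          then show ?thesis using eq by blast
        qed
        then show "q \<in> G \<longleftrightarrow> q \<in> G'" using G G' q by simp
      qed
    qed
    then show "G = G'" using eq by blast
  qed
  moreover have "(\<lambda>G. G - Q) ` ?C \<subseteq> Pow (E - Q)" by auto
  ultimately have "card ?C \<le> card (Pow (E - Q))"
    using assms(1) by (intro card_inj_on_le) auto
  also have "\<dots> = 2 ^ (card E - card Q)"
    using assms(1,2) by (simp add: card_Pow card_Diff_subset finite_subset)
  finally show ?thesis .
qed

lemma card_equal_traces_le:
  assumes "finite V" "S \<subseteq> V" "u \<in> V - S" "v \<in> V - S" "u \<noteq> v"
  shows "card {G \<in> Pow (pairs V). \<forall>x\<in>S. {x, u} \<in> G \<longleftrightarrow> {x, v} \<in> G}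
    \<le> 2 ^ (card (pairs V) - card S)"
proof -
  define Q where "Q = (\<lambda>x. {x, u}) ` S"
  have swap: "id(u := v) ` {x, u} = {x, v}" if "x \<in> S" for x
    using that assms(3) by auto
  have "Q \<subseteq> pairs V" using assms(2,3) by (auto simp: Q_def pairs_def card_insert_if)
  moreover have "ranked_on (image (id(u := v))) Q"
    unfolding ranked_on_def
  proof (intro exI[of _ "\<lambda>_. 0"] ballI impI)
    fix q assume "q \<in> Q" "id(u := v) ` q \<in> Q"
    then obtain x y where "x \<in> S" "y \<in> S" "{x, v} = {y, u}" by (auto simp: Q_def swap)
    then show "(0::nat) < 0" using assms(3-5) by (auto simp: doubleton_eq_iff)
  qed
  ultimately have "card {G \<in> Pow (pairs V). \<forall>q\<in>Q. q \<in> G \<longleftrightarrow> id(u := v) ` q \<in> G}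
      \<le> 2 ^ (card (pairs V) - card Q)"
    using assms(1) by (intro card_constrained_subsets_le finite_pairs)
  moreover have "card Q = card S"
    unfolding Q_def using assms(3) by (intro card_image inj_onI) (auto simp: doubleton_eq_iff)
  moreover have "(\<forall>q\<in>Q. q \<in> G \<longleftrightarrow> id(u := v) ` q \<in> G) \<longleftrightarrow> (\<forall>x\<in>S. {x, u} \<in> G \<longleftrightarrow> {x, v} \<in> G)"
    for G
  proof -
    have "(\<forall>q\<in>Q. q \<in> G \<longleftrightarrow> id(u := v) ` q \<in> G)
        \<longleftrightarrow> (\<forall>x\<in>S. {x, u} \<in> G \<longleftrightarrow> id(u := v) ` {x, u} \<in> G)"
      unfolding Q_def by blast
    also have "\<dots> \<longleftrightarrow> (\<forall>x\<in>S. {x, u} \<in> G \<longleftrightarrow> {x, v} \<in> G)"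
      by (intro ball_cong refl) (simp only: swap)
    finally show ?thesis .
  qed
  ultimately show ?thesis by simp
qed

lemma card_not_separating_le:
  assumes "finite V" "S \<subseteq> V"
  shows "card {G \<in> Pow (pairs V). \<not> separating_set V G S}
    \<le> card V * card V * 2 ^ (card (pairs V) - card S)"
proof -
  let ?K = "2 ^ (card (pairs V) - card S)"
  define W where "W = {(u, v). u \<in> V - S \<and> v \<in> V - S \<and> u \<noteq> v}"
  define C where "C = (\<lambda>(u, v). {G \<in> Pow (pairs V). \<forall>x\<in>S. {x, u} \<in> G \<longleftrightarrow> {x, v} \<in> G})"
  have "finite W" using assms(1) by (intro finite_subset[of W "V \<times> V"]) (auto simp: W_def)
  have "{G \<in> Pow (pairs V). \<not> separating_set V G S} \<subseteq> (\<Union>w\<in>W. C w)"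
    by (auto simp: separating_set_def inj_on_def neighbours_in_def W_def C_def)
  then have "card {G \<in> Pow (pairs V). \<not> separating_set V G S} \<le> card (\<Union>w\<in>W. C w)"
    using \<open>finite W\<close> assms(1) by (intro card_mono) (auto simp: C_def finite_pairs)
  also have "\<dots> \<le> (\<Sum>w\<in>W. card (C w))" by (rule card_UN_le[OF \<open>finite W\<close>])
  also have "\<dots> \<le> card W * ?K"
    using sum_bounded_above[of W "\<lambda>w. card (C w)" ?K] card_equal_traces_le[OF assms]
    by (force simp: W_def C_def)
  also have "card W \<le> card V * card V"
    using card_mono[of "V \<times> V" W] assms(1) by (auto simp: W_def card_cartesian_product)
  finally show ?thesis by simp
qed

section \<open>Graphs in which a set is not rigid\<close>

definition escaping :: "('a \<Rightarrow> 'a) \<Rightarrow> 'a set \<Rightarrow> 'a set" where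
  "escaping \<pi> S = {x \<in> S. \<pi> x \<notin> S}"

definition displaced :: "('a \<Rightarrow> 'a) \<Rightarrow> 'a set \<Rightarrow> 'a set" where
  "displaced \<pi> S = {x \<in> S. \<pi> x \<noteq> x \<and> \<pi> x \<in> S}"

lemma real_choose_two: "real (n choose 2) = real n * (real n - 1) / 2"
proof -
  have "even (n * (n - 1))" by (cases "even n") auto
  then have "real (n choose 2) = real (n * (n - 1)) / 2"
    by (simp add: choose_two real_of_nat_div)
  then show ?thesis by (cases n) (auto simp: algebra_simps)
qed

lemma card_pairs_meeting_ge:
  assumes "finite S" "L \<subseteq> S"
  shows "real (card L) * (real (card S) - 1) / 2 \<le> real (card {q \<in> pairs S. q \<inter> L \<noteq> {}})"
proof -
  have sub: "pairs (S - L) \<subseteq> pairs S" by (auto simp: pairs_def)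
  have "{q \<in> pairs S. q \<inter> L \<noteq> {}} = pairs S - pairs (S - L)" by (auto simp: pairs_def)
  then have "card {q \<in> pairs S. q \<inter> L \<noteq> {}} = card (pairs S) - card (pairs (S - L))"
    using card_Diff_subset[OF finite_pairs sub] assms(1) by simp
  moreover have "card (pairs (S - L)) \<le> card (pairs S)"
    by (rule card_mono[OF finite_pairs[OF assms(1)] sub])
  moreover have "card (S - L) = card S - card L" "card L \<le> card S"
    using assms finite_subset by (auto intro: card_Diff_subset card_mono)
  ultimately have "real (card {q \<in> pairs S. q \<inter> L \<noteq> {}})
      = real (card S choose 2) - real ((card S - card L) choose 2)"
    using assms(1) by (simp add: of_nat_diff card_pairs)
  also have "\<dots> = real (card L) * (real (card S) - 1) / 2
      + real (card L) * (real (card S) - real (card L)) / 2"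
    using \<open>card L \<le> card S\<close> by (simp add: real_choose_two of_nat_diff field_simps)
  moreover have "0 \<le> real (card L) * (real (card S) - real (card L))"
    using \<open>card L \<le> card S\<close> by simp
  ultimately show ?thesis by linarith
qed

lemma card_cross_pairs:
  assumes "finite A" "finite B" "A \<inter> B = {}"
  shows "card ((\<lambda>(a, b). {a, b}) ` (A \<times> B)) = card A * card B"
proof -
  have "inj_on (\<lambda>(a, b). {a, b}) (A \<times> B)"
    using assms(3) by (auto simp: inj_on_def doubleton_eq_iff)
  then show ?thesis using assms(1,2) by (simp add: card_image card_cartesian_product)
qed

text \<open>Greedy choice: each picked point excludes at most three points, itself, its image and
  its unique preimage.\<close>

lemma ex_subset_disjoint_image:
  assumes "finite X" "inj_on f X" "\<forall>x\<in>X. f x \<noteq> x"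
  shows "\<exists>A \<subseteq> X. f ` A \<inter> A = {} \<and> card X \<le> 3 * card A"
  using assms
proof (induction "card X" arbitrary: X rule: less_induct)
  case less
  show ?case
  proof (cases "X = {}")
    case True
    then show ?thesis by auto
  next
    case False
    then obtain x where x: "x \<in> X" by auto
    define Y where "Y = {y \<in> X. f y = x}"
    have "finite Y" using less.prems(1) by (simp add: Y_def)
    moreover have "\<forall>a\<in>Y. \<forall>b\<in>Y. a = b"
      using less.prems(2) unfolding Y_def inj_on_def by auto
    ultimately have "card Y \<le> 1" by (simp add: card_le_Suc0_iff_eq)
    moreover have "card {x, f x} \<le> 2" by (cases "x = f x") auto
    ultimately have "card ({x, f x} \<union> Y) \<le> 3"
      using card_Un_le[of "{x, f x}" Y] by simp
    define X' where "X' = X - ({x, f x} \<union> Y)"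
    have "card X \<le> card X' + 3"
      unfolding X'_def using diff_card_le_card_Diff[of "{x, f x} \<union> Y" X] less.prems(1)
        \<open>card ({x, f x} \<union> Y) \<le> 3\<close> by (simp add: Y_def)
    have "card X' < card X"
      unfolding X'_def using x less.prems(1) by (intro psubset_card_mono) auto
    moreover have X': "finite X'" "inj_on f X'" "\<forall>x\<in>X'. f x \<noteq> x"
      using less.prems inj_on_subset[OF less.prems(2), of X'] unfolding X'_def by auto
    ultimately have "\<exists>A' \<subseteq> X'. f ` A' \<inter> A' = {} \<and> card X' \<le> 3 * card A'"
      by (rule less.hyps)
    then obtain A' where A': "A' \<subseteq> X'" "f ` A' \<inter> A' = {}" "card X' \<le> 3 * card A'"
      by blast
    have "x \<notin> A'" "finite A'"
      using A'(1) X'(1) finite_subset unfolding X'_def by auto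
    then have "card (insert x A') = card A' + 1" by simp
    moreover have "f ` insert x A' \<inter> insert x A' = {}"
    proof -
      have "f x \<notin> insert x A'" using A'(1) less.prems(3) x unfolding X'_def by auto
      moreover have "f a \<notin> insert x A'" if "a \<in> A'" for a
        using that A' unfolding X'_def Y_def by auto
      ultimately show ?thesis by auto
    qed
    moreover have "insert x A' \<subseteq> X" using A'(1) x unfolding X'_def by auto
    ultimately show ?thesis using \<open>card X \<le> card X' + 3\<close> A'(3) by (intro exI[of _ "insert x A'"]) auto
  qed
qed

lemma ex_displaced_subset_disjoint_image:
  fixes \<pi> :: "'a \<Rightarrow> 'a"
  assumes S: "finite S" "16 \<le> card S" and \<pi>: "inj_on \<pi> S"
  shows "\<exists>A \<subseteq> displaced \<pi> S. \<pi> ` A \<inter> A = {} \<and> 8 * card A \<le> card S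
           \<and> card (displaced \<pi> S) \<le> 16 * card A"
proof -
  let ?D = "displaced \<pi> S"
  have "?D \<subseteq> S" by (auto simp: displaced_def)
  then have "finite ?D" "inj_on \<pi> ?D" "\<forall>x\<in>?D. \<pi> x \<noteq> x"
    using S(1) inj_on_subset[OF \<pi>] finite_subset by (auto simp: displaced_def)
  then have "\<exists>A \<subseteq> ?D. \<pi> ` A \<inter> A = {} \<and> card ?D \<le> 3 * card A"
    by (rule ex_subset_disjoint_image)
  then obtain A0 where A0: "A0 \<subseteq> ?D" "\<pi> ` A0 \<inter> A0 = {}" "card ?D \<le> 3 * card A0"
    by blast
  obtain A where A: "A \<subseteq> A0" "card A = min (card A0) (card S div 8)"
    using obtain_subset_with_card_n[of "min (card A0) (card S div 8)" A0] by auto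
  have "card ?D \<le> 16 * card A"
  proof (cases "card A0 \<le> card S div 8")
    case True
    then show ?thesis using A(2) A0(3) by simp
  next
    case False
    have "card ?D \<le> card S" using S(1) \<open>?D \<subseteq> S\<close> by (rule card_mono)
    moreover have "card S \<le> 16 * (card S div 8)" using S(2) by presburger
    ultimately show ?thesis using A(2) False by simp
  qed
  moreover have "\<pi> ` A \<inter> A = {}" "A \<subseteq> ?D" using A(1) A0(1,2) by blast+
  moreover have "8 * card A \<le> card S" using A(2) by linarith
  ultimately show ?thesis by blast
qed

text \<open>Pairs joining a set \<open>A\<close> of displaced points, chosen with \<open>\<pi> ` A\<close> disjoint from \<open>A\<close>,
  to the points outside \<open>A \<union> \<pi> ` A\<close>: no such pair is mapped onto another one.\<close>

lemma ex_cross_pairs_displaced: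
  fixes \<pi> :: "'a \<Rightarrow> 'a"
  assumes S: "finite S" "16 \<le> card S" and \<pi>: "inj_on \<pi> S"
    and few_escaping: "4 * card (escaping \<pi> S) < card S"
  shows "\<exists>Q \<subseteq> pairs (S - escaping \<pi> S). (\<forall>q\<in>Q. \<pi> ` q \<notin> Q)
    \<and> real (card S) / 32 * real (card (displaced \<pi> S)) \<le> real (card Q)"
proof -
  define L where "L = escaping \<pi> S"
  obtain A where A: "A \<subseteq> displaced \<pi> S" "\<pi> ` A \<inter> A = {}" "8 * card A \<le> card S"
    "card (displaced \<pi> S) \<le> 16 * card A"
    using ex_displaced_subset_disjoint_image[OF S \<pi>] by blast
  have A_sub: "A \<subseteq> S - L" using A(1) by (auto simp: L_def displaced_def escaping_def)
  then have "finite A" using S(1) finite_subset by blast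
  define B where "B = (S - L) - (A \<union> \<pi> ` A)"
  define Q where "Q = (\<lambda>(a, b). {a, b}) ` (A \<times> B)"
  have "Q \<subseteq> pairs (S - L)"
    using A_sub by (auto simp: Q_def B_def pairs_def card_insert_if)
  moreover have "\<pi> ` q \<notin> Q" if "q \<in> Q" for q
  proof
    assume "\<pi> ` q \<in> Q"
    obtain a b where "a \<in> A" "q = {a, b}" using \<open>q \<in> Q\<close> by (auto simp: Q_def)
    obtain a2 b2 where "a2 \<in> A" "b2 \<in> B" "\<pi> ` q = {a2, b2}"
      using \<open>\<pi> ` q \<in> Q\<close> by (auto simp: Q_def)
    then have "\<pi> a \<in> A \<union> B" using \<open>q = {a, b}\<close> by auto
    moreover have "\<pi> a \<notin> A" using \<open>a \<in> A\<close> A(2) by blast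
    ultimately show False using \<open>a \<in> A\<close> by (auto simp: B_def)
  qed
  moreover have "real (card S) / 32 * real (card (displaced \<pi> S)) \<le> real (card Q)"
  proof -
    have "card (A \<union> \<pi> ` A) \<le> 2 * card A"
      using card_Un_le[of A "\<pi> ` A"] card_image_le[OF \<open>finite A\<close>, of \<pi>] by simp
    moreover have "card (S - L) = card S - card L"
      using S(1) by (simp add: L_def escaping_def card_Diff_subset)
    moreover have "card (S - L) - card (A \<union> \<pi> ` A) \<le> card B"
      unfolding B_def using \<open>finite A\<close> by (intro diff_card_le_card_Diff) auto
    ultimately have B_large: "real (card S) / 2 \<le> real (card B)"
      using few_escaping A(3) unfolding L_def by linarith
    have "real (card S) / 32 * real (card (displaced \<pi> S))
        \<le> real (card S) / 32 * (16 * real (card A))"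
      using A(4) by (intro mult_left_mono) auto
    also have "\<dots> = real (card A) * (real (card S) / 2)" by simp
    also have "\<dots> \<le> real (card A) * real (card B)" using B_large by (intro mult_left_mono) auto
    also have "\<dots> = real (card Q)"
      unfolding Q_def using \<open>finite A\<close> S(1) by (subst card_cross_pairs) (auto simp: B_def)
    finally show ?thesis .
  qed
  ultimately show ?thesis unfolding L_def by blast
qed

lemma ranked_on_two_layers:
  assumes "\<forall>q\<in>Q1. \<rho> q \<notin> Q1 \<union> Q2" "\<forall>q\<in>Q2. \<rho> q \<notin> Q2"
  shows "ranked_on \<rho> (Q1 \<union> Q2)"
  unfolding ranked_on_def
proof (intro exI[of _ "\<lambda>q. if q \<in> Q2 then 1 else 0 :: nat"] ballI impI)
  fix q assume "q \<in> Q1 \<union> Q2" "\<rho> q \<in> Q1 \<union> Q2"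
  with assms show "(if \<rho> q \<in> Q2 then 1 else 0) < (if q \<in> Q2 then 1 else (0::nat))" by auto
qed

lemma ex_second_layer_pairs:
  fixes \<pi> :: "'a \<Rightarrow> 'a"
  assumes S: "finite S" "16 \<le> card S" and \<pi>: "inj_on \<pi> S"
  defines "s \<equiv> real (card S)" and "k \<equiv> real (card (escaping \<pi> S))"
    and "j \<equiv> real (card (displaced \<pi> S))"
  shows "\<exists>Q \<subseteq> pairs (S - escaping \<pi> S). (\<forall>q\<in>Q. \<pi> ` q \<notin> Q)
    \<and> (3 * s / 8 - 1 / 2) * k + s / 32 * j \<le> k * (s - 1) / 2 + real (card Q)"
proof (cases "s \<le> 4 * k")
  case True
  have "j \<le> s" "16 \<le> s"
    using S by (auto simp: j_def s_def displaced_def intro: card_mono)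
  then have "s / 32 * j \<le> s * s / 32" by (simp add: mult_left_mono)
  also have "\<dots> \<le> k * s / 8" using True \<open>16 \<le> s\<close> by (simp add: mult_right_mono)
  finally have "(3 * s / 8 - 1 / 2) * k + s / 32 * j \<le> k * (s - 1) / 2"
    by (simp add: field_simps)
  then show ?thesis by (intro exI[of _ "{}"]) simp
next
  case False
  then obtain Q where Q: "Q \<subseteq> pairs (S - escaping \<pi> S)" "\<forall>q\<in>Q. \<pi> ` q \<notin> Q"
    "s / 32 * j \<le> real (card Q)"
    using ex_cross_pairs_displaced[OF S \<pi>] unfolding s_def k_def j_def by auto
  moreover have "(3 * s / 8 - 1 / 2) * k \<le> k * (s - 1) / 2"
    using S(2) by (simp add: s_def k_def field_simps)
  ultimately show ?thesis by (intro exI[of _ Q]) auto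
qed

text \<open>The pairs meeting an escaping point are mapped outside \<open>pairs S\<close> and form the first
  layer of the ranking.\<close>

lemma ex_ranked_pairs:
  fixes \<pi> :: "'a \<Rightarrow> 'a"
  assumes S: "finite S" "16 \<le> card S" and \<pi>: "inj_on \<pi> S"
  shows "\<exists>Q \<subseteq> pairs S. ranked_on (image \<pi>) Q
    \<and> (3 * real (card S) / 8 - 1 / 2) * real (card (escaping \<pi> S))
        + real (card S) / 32 * real (card (displaced \<pi> S)) \<le> real (card Q)"
proof -
  let ?L = "escaping \<pi> S"
  define QL where "QL = {q \<in> pairs S. q \<inter> ?L \<noteq> {}}"
  obtain QB where QB: "QB \<subseteq> pairs (S - ?L)" "\<forall>q\<in>QB. \<pi> ` q \<notin> QB"
    "(3 * real (card S) / 8 - 1 / 2) * real (card ?L)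
       + real (card S) / 32 * real (card (displaced \<pi> S))
     \<le> real (card ?L) * (real (card S) - 1) / 2 + real (card QB)"
    using ex_second_layer_pairs[OF S \<pi>] by blast
  have "?L \<subseteq> S" by (auto simp: escaping_def)
  then have "real (card ?L) * (real (card S) - 1) / 2 \<le> real (card QL)"
    using card_pairs_meeting_ge[OF S(1)] unfolding QL_def by blast
  moreover have QB_inside: "q \<inter> ?L = {}" "q \<in> pairs S" if "q \<in> QB" for q
    using that QB(1) by (auto simp: pairs_def)
  then have sub: "QL \<union> QB \<subseteq> pairs S" by (auto simp: QL_def)
  moreover have "card (QL \<union> QB) = card QL + card QB"
    using QB_inside S(1) finite_subset[OF sub finite_pairs]
    by (intro card_Un_disjoint) (auto simp: QL_def)
  moreover have "ranked_on (image \<pi>) (QL \<union> QB)"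
  proof (rule ranked_on_two_layers)
    show "\<forall>q\<in>QL. \<pi> ` q \<notin> QL \<union> QB"
      using sub by (fastforce simp: QL_def escaping_def pairs_def)
    show "\<forall>q\<in>QB. \<pi> ` q \<notin> QB" by (rule QB(2))
  qed
  ultimately show ?thesis using QB(3) by (intro exI[of _ "QL \<union> QB"]) auto
qed

text \<open>Up to the factor \<open>2 ^ card (pairs V)\<close>, the product of these weights over \<open>S\<close> bounds the
  number of graphs respected by an injection \<open>\<pi>\<close>, and its sum over all maps \<open>S \<rightarrow> V\<close>
  factorises.\<close>

definition move_weight :: "real \<Rightarrow> real \<Rightarrow> 'a set \<Rightarrow> 'a \<Rightarrow> 'a \<Rightarrow> real" where
  "move_weight \<alpha> \<beta> S x v = (if v = x then 1 else if v \<in> S then \<beta> else \<alpha>)"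

lemma move_weight_nonneg: "0 \<le> \<alpha> \<Longrightarrow> 0 \<le> \<beta> \<Longrightarrow> 0 \<le> move_weight \<alpha> \<beta> S x v"
  by (simp add: move_weight_def)

lemma prod_move_weight:
  assumes "finite S"
  shows "(\<Prod>x\<in>S. move_weight \<alpha> \<beta> S x (\<pi> x))
    = \<alpha> ^ card (escaping \<pi> S) * \<beta> ^ card (displaced \<pi> S)"
proof -
  have "(\<Prod>x\<in>S. move_weight \<alpha> \<beta> S x (\<pi> x))
      = (\<Prod>x\<in>S \<inter> {x. \<pi> x = x}. 1) * (\<Prod>x\<in>S \<inter> - {x. \<pi> x = x}. if \<pi> x \<in> S then \<beta> else \<alpha>)"
    unfolding move_weight_def by (rule prod.If_cases[OF assms])
  also have "(\<Prod>x\<in>S \<inter> - {x. \<pi> x = x}. if \<pi> x \<in> S then \<beta> else \<alpha>)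
      = (\<Prod>x\<in>displaced \<pi> S. \<beta>) * (\<Prod>x\<in>escaping \<pi> S. \<alpha>)"
  proof -
    have "S \<inter> - {x. \<pi> x = x} \<inter> {x. \<pi> x \<in> S} = displaced \<pi> S"
      "S \<inter> - {x. \<pi> x = x} \<inter> - {x. \<pi> x \<in> S} = escaping \<pi> S"
      by (auto simp: displaced_def escaping_def)
    moreover have "finite (S \<inter> - {x. \<pi> x = x})" using assms by simp
    ultimately show ?thesis by (simp add: prod.If_cases)
  qed
  finally show ?thesis by simp
qed

lemma sum_move_weight_le:
  assumes "finite V" "S \<subseteq> V" "x \<in> S" "0 \<le> \<alpha>" "0 \<le> \<beta>"
  shows "(\<Sum>v\<in>V. move_weight \<alpha> \<beta> S x v) \<le> 1 + real (card S) * \<beta> + real (card V) * \<alpha>"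
proof -
  have "finite S" using assms(1,2) finite_subset by blast
  have inside: "(\<Sum>v\<in>S - {x}. move_weight \<alpha> \<beta> S x v) = (\<Sum>v\<in>S - {x}. \<beta>)"
    by (rule sum.cong) (auto simp: move_weight_def)
  have outside: "(\<Sum>v\<in>V - S. move_weight \<alpha> \<beta> S x v) = (\<Sum>v\<in>V - S. \<alpha>)"
    using assms(3) by (intro sum.cong) (auto simp: move_weight_def)
  have "(\<Sum>v\<in>V. move_weight \<alpha> \<beta> S x v)
      = move_weight \<alpha> \<beta> S x x + (\<Sum>v\<in>S - {x}. move_weight \<alpha> \<beta> S x v)
        + (\<Sum>v\<in>V - S. move_weight \<alpha> \<beta> S x v)"
    using assms(1-3) \<open>finite S\<close> by (simp add: sum.subset_diff[of S V] sum.remove)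
  also have "\<dots> = 1 + real (card (S - {x})) * \<beta> + real (card (V - S)) * \<alpha>"
    unfolding inside outside by (simp add: move_weight_def)
  also have "\<dots> \<le> 1 + real (card S) * \<beta> + real (card V) * \<alpha>"
    using assms \<open>finite S\<close> by (simp add: add_mono mult_right_mono card_mono)
  finally show ?thesis .
qed

lemma sum_PiE_move_weight_le:
  assumes "finite V" "S \<subseteq> V" "0 \<le> \<alpha>" "0 \<le> \<beta>"
  shows "(\<Sum>\<pi>\<in>PiE S (\<lambda>_. V) - {restrict id S}. \<Prod>x\<in>S. move_weight \<alpha> \<beta> S x (\<pi> x))
    \<le> (1 + real (card S) * \<beta> + real (card V) * \<alpha>) ^ card S - 1"
proof -
  have "finite S" using assms(1,2) finite_subset by blast
  have "restrict id S \<in> PiE S (\<lambda>_. V)" using assms(2) by auto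
  then have "(\<Sum>\<pi>\<in>PiE S (\<lambda>_. V) - {restrict id S}. \<Prod>x\<in>S. move_weight \<alpha> \<beta> S x (\<pi> x))
      = (\<Sum>\<pi>\<in>PiE S (\<lambda>_. V). \<Prod>x\<in>S. move_weight \<alpha> \<beta> S x (\<pi> x))
        - (\<Prod>x\<in>S. move_weight \<alpha> \<beta> S x (restrict id S x))"
    using \<open>finite S\<close> assms(1) by (simp add: sum_diff1 finite_PiE)
  also have "(\<Prod>x\<in>S. move_weight \<alpha> \<beta> S x (restrict id S x)) = 1"
    by (simp add: move_weight_def)
  also have "(\<Sum>\<pi>\<in>PiE S (\<lambda>_. V). \<Prod>x\<in>S. move_weight \<alpha> \<beta> S x (\<pi> x))
      = (\<Prod>x\<in>S. \<Sum>v\<in>V. move_weight \<alpha> \<beta> S x v)"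
    using \<open>finite S\<close> assms(1) by (rule prod_sum_PiE[symmetric])
  also have "\<dots> \<le> (\<Prod>x\<in>S. 1 + real (card S) * \<beta> + real (card V) * \<alpha>)"
    using assms by (intro prod_mono conjI sum_nonneg move_weight_nonneg sum_move_weight_le) auto
  finally show ?thesis by (simp only: prod_constant)
qed

lemma card_respecting_graphs_le_ranked:
  assumes V: "finite V" "S \<subseteq> V" and Q: "Q \<subseteq> pairs S" "ranked_on (image \<pi>) Q"
  shows "real (card {G \<in> Pow (pairs V). respects_edges \<pi> S G G})
    \<le> 2 ^ card (pairs V) * 2 powr - real (card Q)"
proof -
  let ?N = "card (pairs V)"
  have QV: "Q \<subseteq> pairs V" using Q(1) V(2) by (auto simp: pairs_def)
  have "{G \<in> Pow (pairs V). respects_edges \<pi> S G G}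
      \<subseteq> {G \<in> Pow (pairs V). \<forall>q\<in>Q. q \<in> G \<longleftrightarrow> \<pi> ` q \<in> G}"
  proof
    fix G assume G: "G \<in> {G \<in> Pow (pairs V). respects_edges \<pi> S G G}"
    have "q \<in> G \<longleftrightarrow> \<pi> ` q \<in> G" if q: "q \<in> Q" for q
    proof -
      obtain x y where "q = {x, y}" "x \<in> S" "y \<in> S"
        using q Q(1) by (auto simp: pairs_def card_2_iff)
      then show ?thesis using G by (simp add: respects_edges_def)
    qed
    then show "G \<in> {G \<in> Pow (pairs V). \<forall>q\<in>Q. q \<in> G \<longleftrightarrow> \<pi> ` q \<in> G}" using G by simp
  qed
  then have "card {G \<in> Pow (pairs V). respects_edges \<pi> S G G}
      \<le> card {G \<in> Pow (pairs V). \<forall>q\<in>Q. q \<in> G \<longleftrightarrow> \<pi> ` q \<in> G}"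
    using V(1) by (intro card_mono) (auto simp: finite_pairs)
  also have "\<dots> \<le> 2 ^ (?N - card Q)"
    by (rule card_constrained_subsets_le[OF finite_pairs[OF V(1)] QV Q(2)])
  finally have "real (card {G \<in> Pow (pairs V). respects_edges \<pi> S G G}) \<le> real (2 ^ (?N - card Q))"
    by (rule of_nat_mono)
  also have "real (2 ^ (?N - card Q)) = (2::real) ^ ?N / 2 ^ card Q"
    using card_mono[OF finite_pairs[OF V(1)] QV] unfolding of_nat_power by (simp add: power_diff)
  also have "\<dots> = 2 ^ ?N * 2 powr - real (card Q)"
    by (simp add: powr_minus powr_realpow divide_inverse)
  finally show ?thesis .
qed

lemma card_respecting_graphs_le:
  fixes \<pi> :: "'a \<Rightarrow> 'a"
  assumes V: "finite V" "S \<subseteq> V" and S: "16 \<le> card S" and \<pi>: "inj_on \<pi> S"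
  defines "\<alpha> \<equiv> 2 powr - (3 * real (card S) / 8 - 1 / 2)"
    and "\<beta> \<equiv> 2 powr - (real (card S) / 32)"
  shows "real (card {G \<in> Pow (pairs V). respects_edges \<pi> S G G})
    \<le> 2 ^ card (pairs V) * (\<Prod>x\<in>S. move_weight \<alpha> \<beta> S x (\<pi> x))"
proof -
  let ?s = "real (card S)"
  let ?k = "real (card (escaping \<pi> S))" and ?j = "real (card (displaced \<pi> S))"
  have "finite S" using V finite_subset by blast
  obtain Q where Q: "Q \<subseteq> pairs S" "ranked_on (image \<pi>) Q"
    "(3 * ?s / 8 - 1 / 2) * ?k + ?s / 32 * ?j \<le> real (card Q)"
    using ex_ranked_pairs[OF \<open>finite S\<close> S \<pi>] by blast
  have "real (card {G \<in> Pow (pairs V). respects_edges \<pi> S G G})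
      \<le> 2 ^ card (pairs V) * 2 powr - real (card Q)"
    by (rule card_respecting_graphs_le_ranked[OF V Q(1,2)])
  also have "\<dots> \<le> 2 ^ card (pairs V) * 2 powr - ((3 * ?s / 8 - 1 / 2) * ?k + ?s / 32 * ?j)"
    using Q(3) by (intro mult_left_mono powr_mono) auto
  also have "2 powr - ((3 * ?s / 8 - 1 / 2) * ?k + ?s / 32 * ?j)
      = \<alpha> ^ card (escaping \<pi> S) * \<beta> ^ card (displaced \<pi> S)"
    unfolding \<alpha>_def \<beta>_def
    by (simp add: powr_realpow[symmetric] powr_powr powr_add[symmetric] algebra_simps)
  also have "\<dots> = (\<Prod>x\<in>S. move_weight \<alpha> \<beta> S x (\<pi> x))"
    by (rule prod_move_weight[OF \<open>finite S\<close>, symmetric])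
  finally show ?thesis .
qed

lemma not_rigid_setE:
  assumes "\<not> rigid_set V G S"
  obtains \<pi> where "\<pi> \<in> PiE S (\<lambda>_. V)" "inj_on \<pi> S" "\<pi> \<noteq> restrict id S"
    "respects_edges \<pi> S G G"
proof -
  obtain f where f: "inj_on f S" "f ` S \<subseteq> V" "respects_edges f S G G" "\<exists>x\<in>S. f x \<noteq> x"
    using assms unfolding rigid_set_def by blast
  have restrict_eq: "restrict f S x = f x" if "x \<in> S" for x using that by simp
  show thesis
  proof
    show "restrict f S \<in> PiE S (\<lambda>_. V)" using f(2) by auto
    show "inj_on (restrict f S) S" using inj_on_cong[OF restrict_eq] f(1) by simp
    show "restrict f S \<noteq> restrict id S"
      using f(4) by (metis id_apply restrict_apply')
    show "respects_edges (restrict f S) S G G"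
      using f(3) respects_edges_cong[of S "restrict f S" f G G] by simp
  qed
qed

lemma card_not_rigid_le:
  assumes V: "finite V" "S \<subseteq> V" and S: "16 \<le> card S"
  shows "real (card {G \<in> Pow (pairs V). \<not> rigid_set V G S})
    \<le> 2 ^ card (pairs V) * ((1 + real (card S) * 2 powr - (real (card S) / 32)
        + real (card V) * 2 powr - (3 * real (card S) / 8 - 1 / 2)) ^ card S - 1)"
proof -
  define \<alpha> where "\<alpha> = (2::real) powr - (3 * real (card S) / 8 - 1 / 2)"
  define \<beta> where "\<beta> = (2::real) powr - (real (card S) / 32)"
  define w where "w \<pi> = (\<Prod>x\<in>S. move_weight \<alpha> \<beta> S x (\<pi> x))" for \<pi> :: "'a \<Rightarrow> 'a"
  define P where "P = {\<pi> \<in> PiE S (\<lambda>_. V). inj_on \<pi> S \<and> \<pi> \<noteq> restrict id S}"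
  define R where "R \<pi> = {G \<in> Pow (pairs V). respects_edges \<pi> S G G}" for \<pi>
  let ?N = "card (pairs V)"
  have "finite S" using V finite_subset by blast
  have "finite P"
    using V(1) \<open>finite S\<close> by (intro finite_subset[of P "PiE S (\<lambda>_. V)"]) (auto simp: P_def finite_PiE)
  have "{G \<in> Pow (pairs V). \<not> rigid_set V G S} \<subseteq> (\<Union>\<pi>\<in>P. R \<pi>)"
    by (auto simp: P_def R_def elim!: not_rigid_setE)
  then have "real (card {G \<in> Pow (pairs V). \<not> rigid_set V G S}) \<le> real (card (\<Union>\<pi>\<in>P. R \<pi>))"
    using V(1) \<open>finite P\<close> by (intro of_nat_mono card_mono) (auto simp: R_def finite_pairs)
  also have "\<dots> \<le> (\<Sum>\<pi>\<in>P. real (card (R \<pi>)))"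
    using of_nat_mono[OF card_UN_le[OF \<open>finite P\<close>, of R], where 'a = real] by simp
  also have "\<dots> \<le> (\<Sum>\<pi>\<in>P. 2 ^ ?N * w \<pi>)"
    using card_respecting_graphs_le[OF V S] unfolding P_def R_def w_def \<alpha>_def \<beta>_def
    by (intro sum_mono) auto
  also have "\<dots> = 2 ^ ?N * (\<Sum>\<pi>\<in>P. w \<pi>)" by (simp add: sum_distrib_left)
  also have "(\<Sum>\<pi>\<in>P. w \<pi>) \<le> (\<Sum>\<pi>\<in>PiE S (\<lambda>_. V) - {restrict id S}. w \<pi>)"
    using V(1) \<open>finite S\<close> unfolding w_def \<alpha>_def \<beta>_def
    by (intro sum_mono2) (auto simp: P_def finite_PiE intro!: prod_nonneg move_weight_nonneg)
  also have "\<dots> \<le> (1 + real (card S) * \<beta> + real (card V) * \<alpha>) ^ card S - 1"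
    unfolding w_def using V by (intro sum_PiE_move_weight_le) (auto simp: \<alpha>_def \<beta>_def)
  finally show ?thesis by (simp add: \<alpha>_def \<beta>_def mult_left_mono)
qed

definition count_determined :: "nat \<Rightarrow> nat \<Rightarrow> nat set set \<Rightarrow> bool" where
  "count_determined n m G1 \<longleftrightarrow> (\<forall>G2 \<in> graphs n.
     (\<forall>F \<in> graphs m. ind_count {..<n} G1 m F = ind_count {..<n} G2 m F)
     \<longrightarrow> graph_iso {..<n} G1 {..<n} G2)"

lemma count_determined_if_rigid_separating:
  assumes "G \<in> graphs n" "s + 2 \<le> n"
    and "rigid_set {..<n} G {..<s}" "separating_set {..<n} G {..<s}"
  shows "count_determined n (s + 2) G"
  unfolding count_determined_def
proof (intro ballI impI)
  fix G2 assume "G2 \<in> graphs n"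
    and "\<forall>F\<in>graphs (s + 2). ind_count {..<n} G (s + 2) F = ind_count {..<n} G2 (s + 2) F"
  then show "graph_iso {..<n} G {..<n} G2"
    using graph_iso_if_equal_induced_counts[of "{..<n}" G G2 "{..<s}"] assms
    by (simp add: graphs_eq_Pow_pairs)
qed

lemma card_not_count_determined_le:
  assumes "s + 2 \<le> n"
  shows "real (card (graphs n)) - real (card {G \<in> graphs n. count_determined n (s + 2) G})
    \<le> real (card {G \<in> Pow (pairs {..<n}). \<not> rigid_set {..<n} G {..<s}})
      + real (card {G \<in> Pow (pairs {..<n}). \<not> separating_set {..<n} G {..<s}})"
proof -
  let ?good = "{G \<in> graphs n. count_determined n (s + 2) G}"
  let ?nonrigid = "{G \<in> Pow (pairs {..<n}). \<not> rigid_set {..<n} G {..<s}}"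
  let ?nonseparating = "{G \<in> Pow (pairs {..<n}). \<not> separating_set {..<n} G {..<s}}"
  have "graphs n - ?good \<subseteq> ?nonrigid \<union> ?nonseparating"
    using count_determined_if_rigid_separating[OF _ assms] by (auto simp: graphs_eq_Pow_pairs)
  then have "card (graphs n - ?good) \<le> card (?nonrigid \<union> ?nonseparating)"
    by (intro card_mono) (auto simp: finite_pairs)
  also have "\<dots> \<le> card ?nonrigid + card ?nonseparating" by (rule card_Un_le)
  finally have bad_le: "card (graphs n - ?good) \<le> card ?nonrigid + card ?nonseparating" .
  have "finite (graphs n)" by (simp add: graphs_eq_Pow_pairs finite_pairs)
  then have "card (graphs n - ?good) = card (graphs n) - card ?good" "card ?good \<le> card (graphs n)"
    by (auto intro: card_Diff_subset card_mono finite_subset)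
  then show ?thesis using of_nat_mono[OF bad_le, where 'a = real] by (simp add: of_nat_diff)
qed

definition error_bound :: "nat \<Rightarrow> nat \<Rightarrow> real" where
  "error_bound n s =
     (1 + real s * 2 powr - (real s / 32) + real n * 2 powr - (3 * real s / 8 - 1 / 2)) ^ s - 1
     + real n * real n / 2 ^ s"

lemma card_count_determined_ge:
  assumes "s + 2 \<le> n" "16 \<le> s"
  shows "1 - error_bound n s
    \<le> real (card {G \<in> graphs n. count_determined n (s + 2) G}) / real (card (graphs n))"
proof -
  let ?N = "n choose 2"
  have card_pairs_n: "card (pairs {..<n}) = ?N" by (simp add: card_pairs)
  have "real n \<le> real ?N" using assms by (simp add: real_choose_two field_simps)
  then have "s \<le> ?N" using assms by linarith
  have "real (card (graphs n)) - real (card {G \<in> graphs n. count_determined n (s + 2) G})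
      \<le> real (card {G \<in> Pow (pairs {..<n}). \<not> rigid_set {..<n} G {..<s}})
        + real (card {G \<in> Pow (pairs {..<n}). \<not> separating_set {..<n} G {..<s}})"
    by (rule card_not_count_determined_le[OF assms(1)])
  also have "real (card {G \<in> Pow (pairs {..<n}). \<not> rigid_set {..<n} G {..<s}})
      \<le> 2 ^ ?N * ((1 + real s * 2 powr - (real s / 32)
          + real n * 2 powr - (3 * real s / 8 - 1 / 2)) ^ s - 1)"
    using card_not_rigid_le[of "{..<n}" "{..<s}"] assms by (simp add: card_pairs_n)
  also have "real (card {G \<in> Pow (pairs {..<n}). \<not> separating_set {..<n} G {..<s}})
      \<le> real (n * n * 2 ^ (?N - s))"
    using card_not_separating_le[of "{..<n}" "{..<s}"] assms
    by (intro of_nat_mono) (simp add: card_pairs_n)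
  also have "real (n * n * 2 ^ (?N - s)) = 2 ^ ?N * (real n * real n / 2 ^ s)"
    using \<open>s \<le> ?N\<close> unfolding of_nat_mult of_nat_power by (simp add: power_diff)
  finally have "(1 - error_bound n s) * 2 ^ ?N
      \<le> real (card {G \<in> graphs n. count_determined n (s + 2) G})"
    by (simp add: card_graphs error_bound_def algebra_simps)
  then show ?thesis by (simp add: card_graphs pos_le_divide_eq)
qed

definition error_envelope :: "real \<Rightarrow> real" where
  "error_envelope s =
     exp (s * (s * 2 powr (- s / 32) + 2 powr (7 / 6 - s / 24))) - 1 + 2 powr (4 / 3 - s / 3)"

lemma error_bound_le_envelope:
  assumes n: "real n \<le> 2 powr ((real s + 2) / 3)"
  shows "error_bound n s \<le> error_envelope (real s)"
proof -
  let ?y = "real s * 2 powr - (real s / 32) + real n * 2 powr - (3 * real s / 8 - 1 / 2)"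
  let ?z = "real s * 2 powr (- real s / 32) + 2 powr (7 / 6 - real s / 24)"
  have "real n * 2 powr - (3 * real s / 8 - 1 / 2)
      \<le> 2 powr ((real s + 2) / 3) * 2 powr - (3 * real s / 8 - 1 / 2)"
    using n by (intro mult_right_mono) auto
  also have "\<dots> = 2 powr (7 / 6 - real s / 24)"
    by (simp add: powr_add[symmetric] field_simps)
  finally have "?y \<le> ?z" by simp
  have "1 + ?y \<le> exp ?y" by (rule exp_ge_add_one_self)
  then have "(1 + ?y) ^ s \<le> exp ?y ^ s" by (intro power_mono) auto
  also have "\<dots> = exp (real s * ?y)" by (simp add: exp_of_nat_mult)
  also have "\<dots> \<le> exp (real s * ?z)" using \<open>?y \<le> ?z\<close> by (simp add: mult_left_mono)
  finally have rigid_part: "(1 + ?y) ^ s - 1 \<le> exp (real s * ?z) - 1" by simp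
  have "real n * real n \<le> 2 powr ((real s + 2) / 3) * 2 powr ((real s + 2) / 3)"
    using n by (intro mult_mono) auto
  also have "\<dots> = 2 powr ((real s + 2) / 3 + (real s + 2) / 3)" by (rule powr_add[symmetric])
  also have "(real s + 2) / 3 + (real s + 2) / 3 = (4 / 3 - real s / 3) + real s" by simp
  also have "(2::real) powr ((4 / 3 - real s / 3) + real s) = 2 powr (4 / 3 - real s / 3) * 2 ^ s"
    by (simp only: powr_add) (simp add: powr_realpow)
  finally have "real n * real n / 2 ^ s \<le> 2 powr (4 / 3 - real s / 3)"
    by (simp add: divide_le_eq)
  with rigid_part show ?thesis by (simp add: error_bound_def error_envelope_def add.assoc)
qed

lemma error_envelope_tendsto_zero: "(error_envelope \<longlongrightarrow> 0) at_top"
  unfolding error_envelope_def by real_asymp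

lemma sub_size_bounds:
  assumes "1 \<le> n"
  shows "3 * log 2 (real n) \<le> real (sub_size n)" "real (sub_size n) \<le> 3 * log 2 (real n) + 1"
proof -
  have "0 \<le> 3 * log 2 (real n)" using assms by simp
  then have "real (sub_size n) = real_of_int \<lceil>3 * log 2 (real n)\<rceil>"
    unfolding sub_size_def by linarith
  then show "3 * log 2 (real n) \<le> real (sub_size n)" "real (sub_size n) \<le> 3 * log 2 (real n) + 1"
    by linarith+
qed

lemma le_two_powr_sub_size:
  assumes "1 \<le> n"
  shows "real n \<le> 2 powr (real (sub_size n) / 3)"
proof -
  have "real n = 2 powr log 2 (real n)" using assms by simp
  also have "\<dots> \<le> 2 powr (real (sub_size n) / 3)"
    using sub_size_bounds(1)[OF assms] by (intro powr_mono) auto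
  finally show ?thesis .
qed

lemma eventually_sub_size_large:
  "eventually (\<lambda>n. 1 \<le> n \<and> 18 \<le> sub_size n \<and> sub_size n \<le> n) sequentially"
proof -
  have "eventually (\<lambda>n. 18 \<le> 3 * log 2 (real n)) sequentially"
    unfolding log_def by real_asymp
  moreover have "eventually (\<lambda>n. 3 * log 2 (real n) + 1 \<le> real n) sequentially"
    unfolding log_def by real_asymp
  moreover have "eventually (\<lambda>n. 1 \<le> n) sequentially" by (rule eventually_ge_at_top)
  ultimately show ?thesis
  proof eventually_elim
    case (elim n)
    then show ?case using sub_size_bounds[of n] by linarith
  qed
qed

lemma filterlim_sub_size_at_top: "filterlim (\<lambda>n. real (sub_size n - 2)) at_top sequentially"
proof (rule filterlim_at_top_mono)
  show "filterlim (\<lambda>n. 3 * log 2 (real n) - 2) at_top sequentially"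
    unfolding log_def by real_asymp
  show "eventually (\<lambda>n. 3 * log 2 (real n) - 2 \<le> real (sub_size n - 2)) sequentially"
    using eventually_sub_size_large
    by eventually_elim (use sub_size_bounds in \<open>auto simp: of_nat_diff\<close>)
qed

lemma eventually_card_count_determined_ge:
  "eventually (\<lambda>n. 1 - error_envelope (real (sub_size n - 2))
     \<le> real (card {G \<in> graphs n. count_determined n (sub_size n) G}) / real (card (graphs n)))
   sequentially"
  using eventually_sub_size_large
proof eventually_elim
  case (elim n)
  define s where "s = sub_size n - 2"
  then have "sub_size n = s + 2" using elim by linarith
  moreover have "real (sub_size n) = real s + 2" using \<open>sub_size n = s + 2\<close> by simp
  then have "real n \<le> 2 powr ((real s + 2) / 3)" using le_two_powr_sub_size[of n] elim by simp
  ultimately show ?case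
    using card_count_determined_ge[of s n] error_bound_le_envelope[of n s] elim by (simp add: s_def)
qed

theorem corollary1:
  shows "(\<lambda>n. real (card {G1 \<in> graphs n. \<forall>G2 \<in> graphs n.
              (\<forall>F \<in> graphs (sub_size n).
                 ind_count {..<n} G1 (sub_size n) F = ind_count {..<n} G2 (sub_size n) F)
              \<longrightarrow> graph_iso {..<n} G1 {..<n} G2})
            / real (card (graphs n)))
         \<longlonglongrightarrow> 1"
proof -
  let ?ratio = "\<lambda>n. real (card {G \<in> graphs n. count_determined n (sub_size n) G})
    / real (card (graphs n))"
  have upper: "?ratio n \<le> 1" for n
  proof -
    have "card {G \<in> graphs n. count_determined n (sub_size n) G} \<le> card (graphs n)"
      by (intro card_mono) (auto simp: graphs_eq_Pow_pairs finite_pairs)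
    then show ?thesis by (simp add: divide_le_eq_1 card_graphs)
  qed
  have "(\<lambda>n. 1 - error_envelope (real (sub_size n - 2))) \<longlonglongrightarrow> 1"
    using tendsto_diff[OF tendsto_const
        filterlim_compose[OF error_envelope_tendsto_zero filterlim_sub_size_at_top], of 1]
    by simp
  then have "?ratio \<longlonglongrightarrow> 1"
    by (rule tendsto_sandwich[OF eventually_card_count_determined_ge
          always_eventually[OF allI[OF upper]] _ tendsto_const])
  then show ?thesis unfolding count_determined_def .
qed

end
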